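(* Let $d\ge 2$ and let $D\subset T_d$ be a domain with $|D|\ge 2$ and $|D|\equiv 2\pmod{d-1}$. Then $D$ is optimal if and only if $D$ is full.
   Context: $T_d$ is the $d$-regular tree (connected, acyclic, every vertex of degree $d$). A domain is a finite nonempty connected set $D$ of vertices of $T_d$, identified with its induced subgraph. For $x\in D$, $\deg_D(x)$ is the number of neighbours of $x$ lying in $D$. The (inner vertex) boundary is $\partial D=\{x\in D:\deg_D(x)<d\}$. For $k\ge1$, $I_d(k)=\min\{|\partial D| : D\subset T_d \text{ a domain with } |D|=k\}$, and $D$ is optimal if $|\partial D|=I_d(|D|)$. For $|D|\ge2$, $R(D)=\{x\in\partial D: 2\le \deg_D(x)\le d-1\}$ and $D$ is full if $R(D)=\emptyset$. *)

theory Defs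
  imports Main
begin

text \<open>Model of the d-regular tree T_d: vertices are reduced words over the alphabet
{0..<d} (no two consecutive letters equal), i.e. the Cayley graph of the free product of
d copies of Z/2. A word w is adjacent to w@[a] (a a letter different from the last
letter of w). Every vertex has exactly d neighbours (for d >= 2).\<close>

definition tvert :: "nat \<Rightarrow> nat list \<Rightarrow> bool" where
  "tvert d w \<longleftrightarrow> set w \<subseteq> {..<d} \<and> (\<forall>i. Suc i < length w \<longrightarrow> w ! i \<noteq> w ! Suc i)"

definition tadj :: "nat \<Rightarrow> nat list \<Rightarrow> nat list \<Rightarrow> bool" where
  "tadj d u v \<longleftrightarrow> tvert d u \<and> tvert d v \<and> (\<exists>a. v = u @ [a] \<or> u = v @ [a])"

definition is_domain :: "nat \<Rightarrow> nat list set \<Rightarrow> bool" where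
  "is_domain d D \<longleftrightarrow> finite D \<and> D \<noteq> {} \<and> (\<forall>x\<in>D. tvert d x) \<and>
     (\<forall>x\<in>D. \<forall>y\<in>D. (x, y) \<in> {(u, v). u \<in> D \<and> v \<in> D \<and> tadj d u v}\<^sup>*)"

definition degD :: "nat \<Rightarrow> nat list set \<Rightarrow> nat list \<Rightarrow> nat" where
  "degD d D x = card {y \<in> D. tadj d x y}"

definition bdry :: "nat \<Rightarrow> nat list set \<Rightarrow> nat list set" where
  "bdry d D = {x \<in> D. degD d D x < d}"

definition Iso :: "nat \<Rightarrow> nat \<Rightarrow> nat" where
  "Iso d k = Min {card (bdry d D) | D. is_domain d D \<and> card D = k}"

definition optimal :: "nat \<Rightarrow> nat list set \<Rightarrow> bool" where
  "optimal d D \<longleftrightarrow> card (bdry d D) = Iso d (card D)"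

definition Rset :: "nat \<Rightarrow> nat list set \<Rightarrow> nat list set" where
  "Rset d D = {x \<in> bdry d D. 2 \<le> degD d D x \<and> degD d D x \<le> d - 1}"

definition full :: "nat \<Rightarrow> nat list set \<Rightarrow> bool" where
  "full d D \<longleftrightarrow> Rset d D = {}"

end

theory Submission
  imports Defs
begin

text \<open>A domain \<open>D\<close> with \<open>|D| \<ge> 2\<close> is a tree without isolated vertices, so its degrees are
  \<open>\<ge> 1\<close> and sum to \<open>2(|D| - 1)\<close>. Interior vertices have degree \<open>d\<close>, hence
  \<open>|D| - 2 = (d - 1) |D - \<partial>D| + (\<Sum>x\<in>\<partial>D. deg x - 1)\<close>. For \<open>|D| = 2 + q(d - 1)\<close> this allows
  at most \<open>q\<close> interior vertices, with equality exactly when every boundary vertex is a leaf,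
  i.e. when \<open>D\<close> is full. Repeatedly giving a deepest vertex \<open>d - 1\<close> new neighbours builds
  domains with \<open>q\<close> interior vertices, so \<open>I\<^sub>d(|D|) = |D| - q\<close>, and \<open>D\<close> is optimal iff it has
  \<open>q\<close> interior vertices.\<close>

lemma tvert_snoc_iff:
  "tvert d (x @ [a]) \<longleftrightarrow> tvert d x \<and> a < d \<and> (x \<noteq> [] \<longrightarrow> a \<noteq> last x)"
proof -
  have "(\<forall>i. Suc i < length (x @ [a]) \<longrightarrow> (x @ [a]) ! i \<noteq> (x @ [a]) ! Suc i) \<longleftrightarrow>
        (\<forall>i. Suc i < length x \<longrightarrow> x ! i \<noteq> x ! Suc i) \<and> (x \<noteq> [] \<longrightarrow> a \<noteq> last x)"
    (is "?L \<longleftrightarrow> ?R")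
  proof
    assume L: ?L
    have "a \<noteq> last x" if "x \<noteq> []"
      using L[rule_format, of "length x - 1"] that by (simp add: nth_append last_conv_nth)
    moreover have "x ! i \<noteq> x ! Suc i" if "Suc i < length x" for i
      using L[rule_format, of i] that by (simp add: nth_append)
    ultimately show ?R by blast
  next
    assume R: ?R
    show ?L
    proof (intro allI impI)
      fix i assume i: "Suc i < length (x @ [a])"
      show "(x @ [a]) ! i \<noteq> (x @ [a]) ! Suc i"
      proof (cases "Suc i < length x")
        case True with R show ?thesis by (simp add: nth_append)
      next
        case False
        with i have "i = length x - 1" "x \<noteq> []" by auto
        with R show ?thesis by (simp add: nth_append last_conv_nth)
      qed
    qed
  qed
  then show ?thesis unfolding tvert_def by auto
qed

lemma is_domain_finite: "is_domain d D \<Longrightarrow> finite D"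
  unfolding is_domain_def by blast

lemma is_domain_tvert: "is_domain d D \<Longrightarrow> x \<in> D \<Longrightarrow> tvert d x"
  unfolding is_domain_def by blast

lemma tadj_sym: "tadj d u v \<longleftrightarrow> tadj d v u"
  unfolding tadj_def by blast

definition rooted :: "nat list set \<Rightarrow> nat list \<Rightarrow> bool" where
  "rooted D r \<longleftrightarrow> r \<in> D \<and> (\<forall>v\<in>D. take (length r) v = r \<and>
      (\<forall>i. length r \<le> i \<longrightarrow> i \<le> length v \<longrightarrow> take i v \<in> D))"

lemma rooted_length_le:
  assumes "rooted D r" "v \<in> D"
  shows "length r \<le> length v"
proof -
  from assms have "length (take (length r) v) = length r" unfolding rooted_def by simp
  then show ?thesis by simp
qed

lemma domain_has_root:
  assumes "is_domain d D"
  obtains r where "rooted D r"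
proof -
  let ?E = "{(u, v). u \<in> D \<and> v \<in> D \<and> tadj d u v}"
  obtain r0 where "r0 \<in> D" using assms unfolding is_domain_def by blast
  \<comment> \<open>A shortest word of \<open>D\<close> is the root: connectedness propagates the prefix property.\<close>
  then obtain r where rD: "r \<in> D" and rmin: "\<And>v. v \<in> D \<Longrightarrow> length r \<le> length v"
    using ex_has_least_nat[of "\<lambda>x. x \<in> D" r0 length] by blast
  have "take (length r) v = r \<and> (\<forall>i. length r \<le> i \<longrightarrow> i \<le> length v \<longrightarrow> take i v \<in> D)"
    if "(r, v) \<in> ?E\<^sup>*" for v
    using that
  proof (induction rule: rtrancl_induct)
    case base
    then show ?case using rD by (auto simp: le_antisym)
  next
    case (step y z)
    then have "y \<in> D" "z \<in> D" and "\<exists>a. z = y @ [a] \<or> y = z @ [a]"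
      unfolding tadj_def by auto
    then obtain a where "z = y @ [a] \<or> y = z @ [a]" by blast
    then show ?case
    proof
      assume z: "z = y @ [a]"
      have "length r \<le> length y" using rmin \<open>y \<in> D\<close> .
      moreover have "take i z \<in> D" if "length r \<le> i" "i \<le> length z" for i
        using step.IH that z \<open>z \<in> D\<close> by (cases "i \<le> length y") auto
      ultimately show ?case using step.IH z by simp
    next
      assume y: "y = z @ [a]"
      have "length r \<le> length z" using rmin \<open>z \<in> D\<close> .
      then show ?case using step.IH y by auto
    qed
  qed
  with assms rD have "rooted D r" unfolding rooted_def is_domain_def by blast
  then show thesis by (rule that)
qed

lemma rooted_nonroot:
  assumes "rooted D r" "x \<in> D" "x \<noteq> r"
  shows "length r < length x" "butlast x \<in> D"
proof -
  from assms have pre: "take (length r) x = r"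
    and mem: "\<And>i. length r \<le> i \<Longrightarrow> i \<le> length x \<Longrightarrow> take i x \<in> D"
    unfolding rooted_def by auto
  show lt: "length r < length x"
    using pre assms(3) rooted_length_le[OF assms(1,2)] by (metis le_neq_implies_less take_all)
  show "butlast x \<in> D"
    using mem[of "length x - 1"] lt by (simp add: butlast_conv_take)
qed

definition children :: "nat list set \<Rightarrow> nat list \<Rightarrow> nat list set" where
  "children D x = {y \<in> D. y \<noteq> [] \<and> butlast y = x}"

lemma neighbours_eq_children_parent:
  assumes "is_domain d D" "x \<in> D"
  shows "{y \<in> D. tadj d x y} = children D x \<union> {y \<in> D. x \<noteq> [] \<and> y = butlast x}"
proof -
  show ?thesis
    using assms is_domain_tvert[OF assms(1)] unfolding tadj_def children_def by auto (metis append_butlast_last_id)+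
qed

lemma degD_rooted:
  assumes "is_domain d D" "rooted D r" "x \<in> D"
  shows "degD d D x = card (children D x) + (if x = r then 0 else 1)"
proof -
  have fin: "finite D" using is_domain_finite[OF assms(1)] .
  have parent: "{y \<in> D. x \<noteq> [] \<and> y = butlast x} = (if x = r then {} else {butlast x})"
  proof (cases "x = r")
    case True
    have "butlast r \<notin> D" if "r \<noteq> []"
      using rooted_length_le[OF assms(2), of "butlast r"] that by (cases r) auto
    then show ?thesis using True by auto
  next
    case False
    then show ?thesis using rooted_nonroot[OF assms(2,3)] by auto
  qed
  have "children D x \<inter> {y \<in> D. x \<noteq> [] \<and> y = butlast x} = {}"
    unfolding children_def by (auto dest!: arg_cong[of _ _ length]; cases x; simp)
  then have "degD d D x = card (children D x) + card {y \<in> D. x \<noteq> [] \<and> y = butlast x}"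
    unfolding degD_def neighbours_eq_children_parent[OF assms(1,3)]
    by (intro card_Un_disjoint) (auto simp: fin children_def)
  then show ?thesis using parent by simp
qed

lemma sum_card_children:
  assumes "finite D" "rooted D r"
  shows "(\<Sum>x\<in>D. card (children D x)) = card D - 1"
proof -
  have "children D x = {y \<in> D - {r}. butlast y = x}" if "x \<in> D" for x
  proof -
    have "butlast r \<noteq> x" if "r \<noteq> []"
      using rooted_length_le[OF assms(2) \<open>x \<in> D\<close>] that by (cases r) auto
    moreover have "y \<noteq> []" if "y \<in> D" "y \<noteq> r" for y
      using rooted_nonroot(1)[OF assms(2) that] by auto
    ultimately show ?thesis unfolding children_def by auto
  qed
  then have "(\<Sum>x\<in>D. card (children D x)) = (\<Sum>x\<in>D. \<Sum>y\<in>{y \<in> D - {r}. butlast y = x}. 1)"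
    by simp
  also have "\<dots> = (\<Sum>y\<in>D - {r}. 1)"
    using rooted_nonroot(2)[OF assms(2)] by (intro sum.group) (auto simp: assms(1))
  finally show ?thesis using assms unfolding rooted_def by simp
qed

text \<open>Handshake lemma: a domain is a tree, so it has \<open>card D - 1\<close> edges.\<close>
lemma sum_degD:
  assumes "is_domain d D"
  shows "(\<Sum>x\<in>D. degD d D x) = 2 * (card D - 1)"
proof -
  obtain r where r: "rooted D r" using domain_has_root[OF assms] .
  have fin: "finite D" using is_domain_finite[OF assms] .
  have rD: "r \<in> D" using r unfolding rooted_def by blast
  have "(\<Sum>x\<in>D. degD d D x) = (\<Sum>x\<in>D. card (children D x)) + (\<Sum>x\<in>D. if x = r then 0 else 1)"
    using degD_rooted[OF assms r] by (simp add: sum.distrib)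
  also have "(\<Sum>x\<in>D. if x = r then 0 else 1) = card D - 1"
    using sum.remove[OF fin rD, of "\<lambda>x. if x = r then 0 else 1::nat"] fin rD by simp
  finally show ?thesis using sum_card_children[OF fin r] by simp
qed

lemma degD_ge_1:
  assumes "is_domain d D" "2 \<le> card D" "x \<in> D"
  shows "1 \<le> degD d D x"
proof -
  obtain r where r: "rooted D r" using domain_has_root[OF assms(1)] .
  have "children D r \<noteq> {}"
  proof -
    have "D \<noteq> {r}" using assms(2) by auto
    then obtain v where v: "v \<in> D" "v \<noteq> r" using assms(3) by blast
    then have lt: "length r < length v" by (rule rooted_nonroot[OF r])
    have "take (Suc (length r)) v \<in> D" "take (length r) v = r"
      using r v lt unfolding rooted_def by auto
    with lt have "take (Suc (length r)) v \<in> children D r"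
      unfolding children_def by (auto simp: butlast_take)
    then show ?thesis by blast
  qed
  moreover have "finite (children D r)"
    using is_domain_finite[OF assms(1)] unfolding children_def by simp
  ultimately show ?thesis
    using degD_rooted[OF assms(1) r assms(3)] by (cases "x = r") (auto simp: Suc_le_eq)
qed

lemma card_children_le:
  assumes "is_domain d D" "x \<in> D"
  shows "card (children D x) + (if x = [] then 0 else 1) \<le> d"
proof -
  define A where "A = {a. a < d \<and> (x \<noteq> [] \<longrightarrow> a \<noteq> last x)}"
  have "children D x \<subseteq> (\<lambda>a. x @ [a]) ` A"
  proof
    fix y assume "y \<in> children D x"
    then have "y \<in> D" and y: "y = x @ [last y]"
      unfolding children_def by (auto simp: append_butlast_last_id)
    then have "tvert d (x @ [last y])" using is_domain_tvert[OF assms(1)] by auto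
    then show "y \<in> (\<lambda>a. x @ [a]) ` A" using y unfolding A_def tvert_snoc_iff by blast
  qed
  moreover have "finite A" unfolding A_def by simp
  ultimately have "card (children D x) \<le> card A"
    by (meson card_image_le card_mono finite_imageI order_trans)
  moreover have "card A + (if x = [] then 0 else 1) = d"
  proof (cases "x = []")
    case False
    have "set x \<subseteq> {..<d}" using is_domain_tvert[OF assms] unfolding tvert_def by blast
    then have "last x < d" using last_in_set[OF False] by auto
    moreover have "A = {..<d} - {last x}" using False unfolding A_def by auto
    ultimately show ?thesis using False by simp
  qed (simp add: A_def)
  ultimately show ?thesis by linarith
qed

lemma degD_le:
  assumes "is_domain d D" "x \<in> D"
  shows "degD d D x \<le> d"
proof -
  obtain r where r: "rooted D r" using domain_has_root[OF assms(1)] .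
  have "x \<noteq> []" if "x \<noteq> r" using rooted_nonroot(1)[OF r assms(2) that] by auto
  then show ?thesis
    using degD_rooted[OF assms(1) r assms(2)] card_children_le[OF assms] by (auto split: if_splits)
qed

lemma card_eq_interior_plus_excess:
  assumes "is_domain d D" "2 \<le> card D"
  shows "card D - 2 = (d - 1) * card (D - bdry d D) + (\<Sum>x\<in>bdry d D. degD d D x - 1)"
proof -
  have fin: "finite D" using is_domain_finite[OF assms(1)] .
  have "(\<Sum>x\<in>D. degD d D x) = (\<Sum>x\<in>D. (degD d D x - 1) + 1)"
    using degD_ge_1[OF assms] by (intro sum.cong) (auto simp: Suc_le_eq)
  then have "(\<Sum>x\<in>D. degD d D x) = (\<Sum>x\<in>D. degD d D x - 1) + card D"
    by (simp add: sum_Suc)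
  then have "card D - 2 = (\<Sum>x\<in>D. degD d D x - 1)"
    using sum_degD[OF assms(1)] assms(2) by simp
  also have "\<dots> = (\<Sum>x\<in>D - bdry d D. degD d D x - 1) + (\<Sum>x\<in>bdry d D. degD d D x - 1)"
    using fin by (intro sum.subset_diff) (auto simp: bdry_def)
  also have "(\<Sum>x\<in>D - bdry d D. degD d D x - 1) = (\<Sum>x\<in>D - bdry d D. d - 1)"
  proof (intro sum.cong refl)
    fix x assume "x \<in> D - bdry d D"
    then show "degD d D x - 1 = d - 1" using degD_le[OF assms(1), of x] unfolding bdry_def by simp
  qed
  finally show ?thesis by simp
qed

lemma full_iff_no_excess:
  assumes "finite D"
  shows "full d D \<longleftrightarrow> (\<Sum>x\<in>bdry d D. degD d D x - 1) = 0"
proof -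
  have "finite (bdry d D)" using assms unfolding bdry_def by simp
  have "full d D \<longleftrightarrow> (\<forall>x\<in>bdry d D. degD d D x - 1 = 0)"
    unfolding full_def Rset_def bdry_def by (auto simp: less_Suc_eq_le[symmetric]) (metis less_2_cases_iff not_less_eq)
  also have "\<dots> \<longleftrightarrow> (\<Sum>x\<in>bdry d D. degD d D x - 1) = 0"
    using \<open>finite (bdry d D)\<close> by simp
  finally show ?thesis .
qed

lemma interior_mono:
  assumes "D \<subseteq> D'" "finite D'"
  shows "D - bdry d D \<subseteq> D' - bdry d D'"
proof
  fix z assume "z \<in> D - bdry d D"
  moreover have "degD d D z \<le> degD d D' z"
    unfolding degD_def using assms by (intro card_mono) auto
  ultimately show "z \<in> D' - bdry d D'" using assms(1) unfolding bdry_def by auto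
qed

lemma is_domain_Un_neighbours:
  assumes "is_domain d D" "x \<in> D" "finite N" "\<forall>y\<in>N. tadj d x y"
  shows "is_domain d (D \<union> N)"
proof -
  let ?E = "{(u, v). u \<in> D \<and> v \<in> D \<and> tadj d u v}"
  let ?E' = "{(u, v). u \<in> D \<union> N \<and> v \<in> D \<union> N \<and> tadj d u v}"
  have con: "\<forall>u\<in>D. \<forall>v\<in>D. (u, v) \<in> ?E\<^sup>*" and tv: "\<forall>z\<in>D. tvert d z"
    using assms(1) unfolding is_domain_def by auto
  have "?E \<subseteq> ?E'" by auto
  have "(u, x) \<in> ?E'\<^sup>* \<and> (x, u) \<in> ?E'\<^sup>*" if "u \<in> D \<union> N" for u
  proof (cases "u \<in> D")
    case True
    then show ?thesis using con assms(2) rtrancl_mono[OF \<open>?E \<subseteq> ?E'\<close>] by blast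
  next
    case False
    with that have "(u, x) \<in> ?E'" "(x, u) \<in> ?E'" using assms(2,4) tadj_sym by auto
    then show ?thesis by blast
  qed
  then have "\<forall>u\<in>D \<union> N. \<forall>v\<in>D \<union> N. (u, v) \<in> ?E'\<^sup>*" by (meson rtrancl_trans)
  moreover have "\<forall>y\<in>N. tvert d y" using assms(4) unfolding tadj_def by blast
  ultimately show ?thesis
    using is_domain_finite[OF assms(1)] assms(2,3) tv unfolding is_domain_def by auto
qed

text \<open>The deepest vertex \<open>x\<close> was a leaf of \<open>D\<close>; in \<open>D'\<close> it keeps its parent and gains
  \<open>d - 1\<close> children, so it becomes interior.\<close>
lemma domain_attach_children:
  assumes "2 \<le> d" "is_domain d D" "x \<in> D" "x \<noteq> []" "butlast x \<in> D"
    and deepest: "\<forall>y\<in>D. length y \<le> length x"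
  defines "D' \<equiv> D \<union> (\<lambda>a. x @ [a]) ` ({..<d} - {last x})"
  shows "is_domain d D'" "card D' = card D + (d - 1)"
    and "card (D - bdry d D) < card (D' - bdry d D')"
proof -
  define N where "N = (\<lambda>a. x @ [a]) ` ({..<d} - {last x})"
  have D': "D' = D \<union> N" unfolding D'_def N_def ..
  have fin: "finite D" using is_domain_finite[OF assms(2)] .
  have finN: "finite N" unfolding N_def by simp
  have tvx: "tvert d x" using is_domain_tvert[OF assms(2,3)] .
  have "last x < d" using tvx last_in_set[OF assms(4)] unfolding tvert_def by auto
  then have cN: "card N = d - 1"
    unfolding N_def by (subst card_image) (auto simp: inj_on_def)
  have "D \<inter> N = {}" using deepest unfolding N_def by fastforce
  then show "card D' = card D + (d - 1)"
    unfolding D' using card_Un_disjoint[OF fin finN] cN by simp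
  have adjN: "\<forall>y\<in>N. tadj d x y"
    using tvx assms(4) unfolding N_def tadj_def by (auto simp: tvert_snoc_iff)
  show "is_domain d D'" unfolding D' using is_domain_Un_neighbours[OF assms(2,3) finN adjN] .
  have finD': "finite D'" unfolding D' using fin finN by simp
  have "x \<notin> D - bdry d D"
  proof -
    have "{y \<in> D. tadj d x y} \<subseteq> {butlast x}"
    proof
      fix y assume "y \<in> {y \<in> D. tadj d x y}"
      then obtain a where "y \<in> D" "y = x @ [a] \<or> x = y @ [a]" unfolding tadj_def by blast
      with deepest show "y \<in> {butlast x}" by auto
    qed
    then have "degD d D x \<le> card {butlast x}" unfolding degD_def by (intro card_mono) auto
    then show ?thesis using assms(1) unfolding bdry_def by auto
  qed
  moreover have "x \<in> D' - bdry d D'"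
  proof -
    have "x = butlast x @ [last x]" using assms(4) by simp
    then have "tadj d x (butlast x)"
      using tvx is_domain_tvert[OF assms(2,5)] unfolding tadj_def by blast
    then have "insert (butlast x) N \<subseteq> {y \<in> D'. tadj d x y}"
      using adjN assms(5) unfolding D' by auto
    moreover have "butlast x \<notin> N" unfolding N_def by (auto dest: arg_cong[of _ _ length])
    then have "card (insert (butlast x) N) = d" using finN cN assms(1) by simp
    moreover have "finite {y \<in> D'. tadj d x y}" using finD' by simp
    ultimately have "d \<le> degD d D' x" unfolding degD_def by (metis card_mono)
    then show ?thesis using assms(3) unfolding bdry_def D' by auto
  qed
  ultimately have "card (insert x (D - bdry d D)) \<le> card (D' - bdry d D')"
    using interior_mono[of D D' d] finD' unfolding D' by (intro card_mono) auto
  moreover have "card (insert x (D - bdry d D)) = Suc (card (D - bdry d D))"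
    using fin \<open>x \<notin> D - bdry d D\<close> by simp
  ultimately show "card (D - bdry d D) < card (D' - bdry d D')" by simp
qed

lemma exists_domain_with_interior:
  assumes "2 \<le> d"
  shows "\<exists>D. is_domain d D \<and> card D = 2 + q * (d - 1) \<and> q \<le> card (D - bdry d D)"
proof -
  have "\<exists>D x. is_domain d D \<and> card D = 2 + q * (d - 1) \<and> q \<le> card (D - bdry d D) \<and>
      x \<in> D \<and> x \<noteq> [] \<and> butlast x \<in> D \<and> (\<forall>y\<in>D. length y \<le> length x)"
  proof (induction q)
    case 0
    have tv: "tvert d []" "tvert d [0]" using assms unfolding tvert_def by auto
    then have "tadj d [] [0]" "tadj d [0] []" unfolding tadj_def by auto
    then have "is_domain d {[], [0]}" unfolding is_domain_def using tv by (auto intro: r_into_rtrancl)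
    then show ?case by (intro exI[of _ "{[], [0]}"] exI[of _ "[0]"]) auto
  next
    case (Suc q)
    then obtain D x where D: "is_domain d D" "card D = 2 + q * (d - 1)" "q \<le> card (D - bdry d D)"
      and x: "x \<in> D" "x \<noteq> []" "butlast x \<in> D" and deepest: "\<forall>y\<in>D. length y \<le> length x"
      by blast
    define D' where "D' = D \<union> (\<lambda>a. x @ [a]) ` ({..<d} - {last x})"
    note D' = domain_attach_children[OF assms D(1) x deepest, folded D'_def]
    define b :: nat where "b = (if last x = 0 then 1 else 0)"
    have "x @ [b] \<in> D'" using assms unfolding D'_def b_def by auto
    moreover have "\<forall>y\<in>D'. length y \<le> length (x @ [b])" using deepest unfolding D'_def by auto
    moreover have "card D' = 2 + Suc q * (d - 1)" using D'(2) D(2) by simp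
    moreover have "Suc q \<le> card (D' - bdry d D')" using D'(3) D(3) by simp
    moreover have "x \<in> D'" using x(1) unfolding D'_def by blast
    ultimately show ?case using D'(1) by (intro exI[of _ D'] exI[of _ "x @ [b]"]) auto
  qed
  then show ?thesis by blast
qed

lemma card_bdry_plus_interior:
  assumes "finite D"
  shows "card (bdry d D) + card (D - bdry d D) = card D"
proof -
  have "bdry d D \<subseteq> D" unfolding bdry_def by blast
  with assms have "card (D - bdry d D) = card D - card (bdry d D)" "card (bdry d D) \<le> card D"
    by (auto intro: card_Diff_subset card_mono finite_subset)
  then show ?thesis by simp
qed

lemma card_interior_le:
  assumes "is_domain d D" "card D = 2 + q * (d - 1)" "2 \<le> d"
  shows "card (D - bdry d D) \<le> q"
proof -
  have "(d - 1) * card (D - bdry d D) \<le> (d - 1) * q"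
    using card_eq_interior_plus_excess[OF assms(1)] assms(2) by (simp add: mult.commute)
  then show ?thesis using assms(3) by simp
qed

lemma Iso_eq:
  assumes "2 \<le> d"
  shows "Iso d (2 + q * (d - 1)) = 2 + q * (d - 2)"
proof -
  let ?k = "2 + q * (d - 1)" and ?m = "2 + q * (d - 2)"
  have "d - 1 = Suc (d - 2)" using assms by simp
  then have k: "?k = ?m + q" by simp
  have bdry_ge: "?m \<le> card (bdry d D)" if D: "is_domain d D" "card D = ?k" for D
    using card_bdry_plus_interior[OF is_domain_finite[OF D(1)], of d] card_interior_le[OF D assms] D(2) k
    by linarith
  let ?S = "{card (bdry d D) |D. is_domain d D \<and> card D = ?k}"
  have "?S \<subseteq> {..?k}"
  proof
    fix n assume "n \<in> ?S"
    then obtain D where "n = card (bdry d D)" "is_domain d D" "card D = ?k" by blast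
    then show "n \<in> {..?k}" using card_bdry_plus_interior[OF is_domain_finite, of d D d] by simp
  qed
  then have "finite ?S" by (rule finite_subset) simp
  moreover obtain D where D: "is_domain d D" "card D = ?k" "q \<le> card (D - bdry d D)"
    using exists_domain_with_interior[OF assms] by blast
  then have "card (bdry d D) = ?m"
    using card_bdry_plus_interior[OF is_domain_finite[OF D(1)], of d] card_interior_le[OF D(1,2) assms] k
    by linarith
  with D have "?m \<in> ?S" by force
  ultimately have "Min ?S = ?m" using bdry_ge by (intro Min_eqI) auto
  then show ?thesis unfolding Iso_def .
qed

lemma optimal_iff_card_interior:
  assumes "2 \<le> d" "is_domain d D" "card D = 2 + q * (d - 1)"
  shows "optimal d D \<longleftrightarrow> card (D - bdry d D) = q"
proof -
  have "d - 1 = Suc (d - 2)" using assms(1) by simp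
  then have "card D = 2 + q * (d - 2) + q" using assms(3) by simp
  moreover have "Iso d (card D) = 2 + q * (d - 2)" unfolding assms(3) by (rule Iso_eq[OF assms(1)])
  moreover have "card (bdry d D) + card (D - bdry d D) = card D"
    by (rule card_bdry_plus_interior[OF is_domain_finite[OF assms(2)]])
  ultimately show ?thesis unfolding optimal_def by linarith
qed

lemma card_interior_eq_iff_full:
  assumes "2 \<le> d" "is_domain d D" "card D = 2 + q * (d - 1)"
  shows "card (D - bdry d D) = q \<longleftrightarrow> full d D"
proof -
  have "card (D - bdry d D) = q \<longleftrightarrow> (\<Sum>x\<in>bdry d D. degD d D x - 1) = 0" (is "?I = q \<longleftrightarrow> ?E = 0")
  proof
    have eq: "(d - 1) * q = (d - 1) * ?I + ?E"
      using card_eq_interior_plus_excess[OF assms(2)] assms(3) by (simp add: mult.commute)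
    show "?E = 0" if "?I = q" using eq that by simp
    show "?I = q" if "?E = 0" using eq that assms(1) by simp
  qed
  also have "\<dots> \<longleftrightarrow> full d D" using full_iff_no_excess[OF is_domain_finite[OF assms(2)]] ..
  finally show ?thesis .
qed

theorem mainTheorem11:
  fixes d :: nat and D :: "nat list set"
  assumes "d \<ge> 2" and "is_domain d D" and "card D \<ge> 2"
    and "card D mod (d - 1) = 2 mod (d - 1)"
  shows "optimal d D \<longleftrightarrow> full d D"
proof -
  have "(d - 1) dvd card D - 2" using assms(3,4) mod_eq_dvd_iff_nat by blast
  then obtain q where "card D - 2 = (d - 1) * q" by (rule dvdE)
  then have q: "card D = 2 + q * (d - 1)" using assms(3) by (simp add: mult.commute)
  show ?thesis
    using optimal_iff_card_interior[OF assms(1,2) q] card_interior_eq_iff_full[OF assms(1,2) q]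
    by simp
qed

end
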